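(* Let $\mathbb{F}$ be a field of characteristic not $2$. For every $\rho\in D$, the linear map $\phi_\rho:\hat{\mathcal{H}}\to\hat{\mathcal{H}}$ defined by $a_i\mapsto a_{i^\rho}$, $s_j\mapsto s_j$, $p_{\bar r,k}\mapsto \mathrm{sgn}(\rho)\,p_{\overline{r^\rho},k}$ is an automorphism of $\hat{\mathcal{H}}$, and the map $\rho\mapsto\phi_\rho$ is a faithful representation of $D$ as a group of automorphisms of $\hat{\mathcal{H}}$.
   Context: Notation: $\mathbb{N}=\{1,2,3,\dots\}$, $3\mathbb{N}=\{3,6,9,\dots\}$; for $r\in\mathbb{Z}$, $\bar r=r+3\mathbb{Z}\in\mathbb{Z}_3$. The algebra $\hat{\mathcal{H}}$ is the commutative $\mathbb{F}$-algebra with basis $\{a_i:i\in\mathbb{Z}\}\cup\{s_j:j\in\mathbb{N}\}\cup\{p_{\bar r,k}:\bar r\in\{\bar1,\bar2\},\ k\in 3\mathbb{N}\}$, where $s_0=0$, $p_{\bar r,j}=0$ for all $\bar r$ whenever $j\notin 3\mathbb{N}$, $p_{\bar 0,j}=-p_{\bar1,j}-p_{\bar2,j}$, $z_{\bar r,j}=p_{\bar r+\bar1,j}-p_{\bar r-\bar1,j}$, and for $i,i'\in\mathbb{Z}$, $j,l\in\mathbb{N}$, $h,k\in3\mathbb{N}$, $\bar r,\bar t\in\mathbb{Z}_3$: (H1) $a_ia_{i'}=\tfrac12(a_i+a_{i'})+s_{|i-i'|}+z_{\bar\imath,|i-i'|}$; (H2) $a_is_j=-\tfrac34a_i+\tfrac38(a_{i-j}+a_{i+j})+\tfrac32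 s_j-z_{\bar\imath,j}$; (H3) $a_ip_{\bar r,k}=\tfrac32p_{\bar r,k}-p_{-(\bar\imath+\bar r),k}$; (H4) $s_js_l=\tfrac34(s_j+s_l)-\tfrac38(s_{|j-l|}+s_{j+l})$; (H5) $s_jp_{\bar r,k}=\tfrac34(p_{\bar r,j}+p_{\bar r,k})-\tfrac38(p_{\bar r,|j-k|}+p_{\bar r,j+k})$; (H6) $p_{\bar r,h}p_{\bar t,k}=\tfrac14(z_{-(\bar r+\bar t),h}+z_{-(\bar r+\bar t),k})-\tfrac18(z_{-(\bar r+\bar t),|h-k|}+z_{-(\bar r+\bar t),h+k})$. For $k\in\tfrac12\mathbb{Z}$ let $\tau_k:\mathbb{Z}\to\mathbb{Z}$, $i\mapsto 2k-i$. Let $D=\langle\tau_0,\tau_{1/2}\rangle$ (the infinite dihedral group acting on $\mathbb{Z}$; its elements are the translations and the reflections $\tau_k$), and $\mathrm{sgn}:D\to\{\pm1\}$ with $\mathrm{sgn}(\rho)=-1$ for reflections and $1$ for translations. Write $i^\rho$ for the image of $i$ under $\rho$; for $\bar r\in\mathbb{Z}_3$ with representative $r$, $\overline{r^\rho}$ is well defined. *)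

theory Defs
  imports Main
begin

text \<open>Basis labels: IA i = a_i (i in Z), IS j = s_j (j >= 1),
  IP r k = p_{r,k} (r in {1,2} as representative of the residue, k in 3N).\<close>
datatype idx = IA int | IS nat | IP int nat

definition valid_idx :: "idx \<Rightarrow> bool" where
  "valid_idx x = (case x of IA i \<Rightarrow> True
                 | IS j \<Rightarrow> j \<ge> 1
                 | IP r k \<Rightarrow> (r = 1 \<or> r = 2) \<and> k \<ge> 1 \<and> 3 dvd k)"

definition supp :: "(idx \<Rightarrow> 'a::zero) \<Rightarrow> idx set" where
  "supp f = {x. f x \<noteq> 0}"

definition Hcarrier :: "(idx \<Rightarrow> 'a::field) set" where
  "Hcarrier = {f. finite (supp f) \<and> (\<forall>x. f x \<noteq> 0 \<longrightarrow> valid_idx x)}"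

definition vadd :: "(idx \<Rightarrow> 'a::field) \<Rightarrow> (idx \<Rightarrow> 'a) \<Rightarrow> idx \<Rightarrow> 'a" where
  "vadd f g = (\<lambda>y. f y + g y)"

definition vsc :: "'a::field \<Rightarrow> (idx \<Rightarrow> 'a) \<Rightarrow> idx \<Rightarrow> 'a" where
  "vsc c f = (\<lambda>y. c * f y)"

definition bvec :: "idx \<Rightarrow> idx \<Rightarrow> 'a::field" where
  "bvec x = (\<lambda>y. if y = x then 1 else 0)"

definition ael :: "int \<Rightarrow> idx \<Rightarrow> 'a::field" where
  "ael i = bvec (IA i)"

definition sel :: "nat \<Rightarrow> idx \<Rightarrow> 'a::field" where
  "sel j = (if j = 0 then (\<lambda>_. 0) else bvec (IS j))"

text \<open>p_{r,j} for any residue class (given by any integer representative r) and any j: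
  zero unless j in 3N; p_{0,j} = - p_{1,j} - p_{2,j}.\<close>
definition pel :: "int \<Rightarrow> nat \<Rightarrow> idx \<Rightarrow> 'a::field" where
  "pel r j = (if \<not> (j \<ge> 1 \<and> 3 dvd j) then (\<lambda>_. 0)
              else if r mod 3 = 1 then bvec (IP 1 j)
              else if r mod 3 = 2 then bvec (IP 2 j)
              else (\<lambda>y. - bvec (IP 1 j) y - bvec (IP 2 j) y))"

definition zel :: "int \<Rightarrow> nat \<Rightarrow> idx \<Rightarrow> 'a::field" where
  "zel r j = (\<lambda>y. pel (r + 1) j y - pel (r - 1) j y)"

text \<open>Products of basis elements, following (H1)--(H6) (both orders for mixed products).\<close>
fun bprod :: "idx \<Rightarrow> idx \<Rightarrow> idx \<Rightarrow> 'a::field" where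
  "bprod (IA i) (IA i') = (\<lambda>y. (1/2) * (ael i y + ael i' y) + sel (nat \<bar>i - i'\<bar>) y
                                + zel i (nat \<bar>i - i'\<bar>) y)"
| "bprod (IA i) (IS j) = (\<lambda>y. - (3/4) * ael i y + (3/8) * (ael (i - int j) y + ael (i + int j) y)
                                + (3/2) * sel j y - zel i j y)"
| "bprod (IS j) (IA i) = (\<lambda>y. - (3/4) * ael i y + (3/8) * (ael (i - int j) y + ael (i + int j) y)
                                + (3/2) * sel j y - zel i j y)"
| "bprod (IA i) (IP r k) = (\<lambda>y. (3/2) * pel r k y - pel (- (i + r)) k y)"
| "bprod (IP r k) (IA i) = (\<lambda>y. (3/2) * pel r k y - pel (- (i + r)) k y)"
| "bprod (IS j) (IS l) = (\<lambda>y. (3/4) * (sel j y + sel l y)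
                                - (3/8) * (sel (nat \<bar>int j - int l\<bar>) y + sel (j + l) y))"
| "bprod (IS j) (IP r k) = (\<lambda>y. (3/4) * (pel r j y + pel r k y)
                                - (3/8) * (pel r (nat \<bar>int j - int k\<bar>) y + pel r (j + k) y))"
| "bprod (IP r k) (IS j) = (\<lambda>y. (3/4) * (pel r j y + pel r k y)
                                - (3/8) * (pel r (nat \<bar>int j - int k\<bar>) y + pel r (j + k) y))"
| "bprod (IP r h) (IP t k) = (\<lambda>y. (1/4) * (zel (- (r + t)) h y + zel (- (r + t)) k y)
                                - (1/8) * (zel (- (r + t)) (nat \<bar>int h - int k\<bar>) y
                                           + zel (- (r + t)) (h + k) y))"

definition hmult :: "(idx \<Rightarrow> 'a::field) \<Rightarrow> (idx \<Rightarrow> 'a) \<Rightarrow> idx \<Rightarrow> 'a" where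
  "hmult f g = (\<lambda>y. \<Sum>x\<in>supp f. \<Sum>x'\<in>supp g. f x * g x' * bprod x x' y)"

text \<open>tau_k for k in (1/2)Z, parametrised by m = 2k in Z: i |-> m - i.\<close>
definition refl_m :: "int \<Rightarrow> int \<Rightarrow> int" where
  "refl_m m = (\<lambda>i. m - i)"

text \<open>D = <tau_0, tau_{1/2}>; as both generators are involutions, the generated
  group equals the generated monoid under composition.\<close>
inductive_set Dinf :: "(int \<Rightarrow> int) set" where
  D_id: "id \<in> Dinf"
| D_t0: "\<rho> \<in> Dinf \<Longrightarrow> refl_m 0 \<circ> \<rho> \<in> Dinf"
| D_t12: "\<rho> \<in> Dinf \<Longrightarrow> refl_m 1 \<circ> \<rho> \<in> Dinf"

definition dsgn :: "(int \<Rightarrow> int) \<Rightarrow> 'a::field" where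
  "dsgn \<rho> = (if \<exists>m. \<rho> = refl_m m then -1 else 1)"

definition phib :: "(int \<Rightarrow> int) \<Rightarrow> idx \<Rightarrow> idx \<Rightarrow> 'a::field" where
  "phib \<rho> x = (case x of IA i \<Rightarrow> ael (\<rho> i)
               | IS j \<Rightarrow> sel j
               | IP r k \<Rightarrow> vsc (dsgn \<rho>) (pel (\<rho> r) k))"

definition phi :: "(int \<Rightarrow> int) \<Rightarrow> (idx \<Rightarrow> 'a::field) \<Rightarrow> idx \<Rightarrow> 'a" where
  "phi \<rho> f = (\<lambda>y. \<Sum>x\<in>supp f. f x * phib \<rho> x y)"

definition is_hat_aut :: "((idx \<Rightarrow> 'a::field) \<Rightarrow> idx \<Rightarrow> 'a) \<Rightarrow> bool" where
  "is_hat_aut \<phi> =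
     (bij_betw \<phi> Hcarrier Hcarrier
      \<and> (\<forall>f\<in>Hcarrier. \<forall>g\<in>Hcarrier. \<phi> (vadd f g) = vadd (\<phi> f) (\<phi> g))
      \<and> (\<forall>c. \<forall>f\<in>Hcarrier. \<phi> (vsc c f) = vsc c (\<phi> f))
      \<and> (\<forall>f\<in>Hcarrier. \<forall>g\<in>Hcarrier. \<phi> (hmult f g) = hmult (\<phi> f) (\<phi> g)))"

end

theory Submission
  imports Defs
begin

(* Every rho in D is an isometry of Z (a translation or a reflection). As phi_rho is linear,
   multiplicativity only has to be checked on products of basis vectors, i.e. on (H1)-(H6),
   and there it holds because rho preserves the distances |i - i'|, maps {i - j, i + j} onto
   {i^rho - j, i^rho + j}, permutes the residues mod 3 compatibly with r |-> -(i + r), and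
   its sign occurs squared in (H6). Since rho permutes Z_3, phi_rho also respects the
   relation p_0 + p_1 + p_2 = 0, which is how the formulas on the basis vectors p_1, p_2
   extend to all p_r. Faithfulness is read off from a_i |-> a_(i^rho). *)

section \<open>Finitely supported functions and linear maps\<close>

definition finsupp :: "(idx \<Rightarrow> 'a::field) \<Rightarrow> bool" where
  "finsupp f \<longleftrightarrow> finite (supp f)"

lemma supp_add_subset [simp]: "supp (\<lambda>y. f y + g y) \<subseteq> supp f \<union> supp (g :: idx \<Rightarrow> 'a::field)"
  by (auto simp: supp_def)

lemma supp_scale_subset [simp]: "supp (\<lambda>y. c * f y) \<subseteq> supp (f :: idx \<Rightarrow> 'a::field)"
  by (auto simp: supp_def)

lemma finsupp_zero [simp, intro]: "finsupp (\<lambda>y. 0)"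
  by (simp add: finsupp_def supp_def)

lemma finsupp_add [simp, intro]: "finsupp f \<Longrightarrow> finsupp g \<Longrightarrow> finsupp (\<lambda>y. f y + g y)"
  unfolding finsupp_def using supp_add_subset by (rule finite_subset) simp

lemma finsupp_diff [simp, intro]: "finsupp f \<Longrightarrow> finsupp g \<Longrightarrow> finsupp (\<lambda>y. f y - g y)"
  unfolding finsupp_def by (rule finite_subset[of _ "supp f \<union> supp g"]) (auto simp: supp_def)

lemma finsupp_uminus [simp, intro]: "finsupp f \<Longrightarrow> finsupp (\<lambda>y. - f y)"
  by (simp add: finsupp_def supp_def)

lemma finsupp_scale [simp, intro]: "finsupp f \<Longrightarrow> finsupp (\<lambda>y. c * f y)"
  unfolding finsupp_def using supp_scale_subset by (rule finite_subset)

lemma finsupp_sum [intro]: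
  "finite S \<Longrightarrow> (\<And>x. x \<in> S \<Longrightarrow> finsupp (u x)) \<Longrightarrow> finsupp (\<lambda>y. \<Sum>x\<in>S. u x y)"
  unfolding finsupp_def
  by (rule finite_subset[of _ "\<Union>x\<in>S. supp (u x)"]) (auto simp: supp_def intro: sum.neutral)

lemma supp_bvec [simp]: "supp (bvec x :: idx \<Rightarrow> 'a::field) = {x}"
  by (auto simp: supp_def bvec_def)

lemma finsupp_bvec [simp, intro]: "finsupp (bvec x)"
  by (simp add: finsupp_def)

lemma finsupp_ael [simp, intro]: "finsupp (ael i)"
  by (simp add: ael_def)

lemma finsupp_sel [simp, intro]: "finsupp (sel j)"
  by (simp add: sel_def)

lemma finsupp_pel [simp, intro]: "finsupp (pel r k)"
  by (simp add: pel_def)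

lemma finsupp_zel [simp, intro]: "finsupp (zel r k)"
  by (simp add: zel_def)

lemma finsupp_bprod [simp, intro]: "finsupp (bprod x x')"
  by (cases x; cases x'; simp only: bprod.simps;
      intro finsupp_add finsupp_diff finsupp_scale finsupp_uminus
        finsupp_ael finsupp_sel finsupp_pel finsupp_zel)

lemma finsupp_phib [simp, intro]: "finsupp (phib \<rho> x)"
  by (cases x) (simp_all add: phib_def vsc_def)

lemma Hcarrier_finsupp: "f \<in> Hcarrier \<Longrightarrow> finsupp f"
  by (simp add: Hcarrier_def finsupp_def)

lemma Hcarrier_valid_idx: "f \<in> Hcarrier \<Longrightarrow> x \<in> supp f \<Longrightarrow> valid_idx x"
  by (simp add: Hcarrier_def supp_def)

(* Linearity is only claimed on finitely supported arguments: phi and hmult are defined by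
   sums over supports, which are junk (empty sums) on infinite supports. *)
definition finsupp_linear :: "((idx \<Rightarrow> 'a::field) \<Rightarrow> idx \<Rightarrow> 'a) \<Rightarrow> bool" where
  "finsupp_linear F \<longleftrightarrow>
     (\<forall>f g. finsupp f \<longrightarrow> finsupp g \<longrightarrow> F (\<lambda>y. f y + g y) = (\<lambda>y. F f y + F g y)) \<and>
     (\<forall>c f. finsupp f \<longrightarrow> F (\<lambda>y. c * f y) = (\<lambda>y. c * F f y))"

lemma finsupp_linearI:
  assumes "\<And>f g. finsupp f \<Longrightarrow> finsupp g \<Longrightarrow> F (\<lambda>y. f y + g y) = (\<lambda>y. F f y + F g y)"
    and "\<And>c f. finsupp f \<Longrightarrow> F (\<lambda>y. c * f y) = (\<lambda>y. c * F f y)"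
  shows "finsupp_linear F"
  using assms by (simp add: finsupp_linear_def)

lemma finsupp_linear_add:
  "finsupp_linear F \<Longrightarrow> finsupp f \<Longrightarrow> finsupp g \<Longrightarrow> F (\<lambda>y. f y + g y) = (\<lambda>y. F f y + F g y)"
  by (simp add: finsupp_linear_def)

lemma finsupp_linear_scale:
  "finsupp_linear F \<Longrightarrow> finsupp f \<Longrightarrow> F (\<lambda>y. c * f y) = (\<lambda>y. c * F f y)"
  by (simp add: finsupp_linear_def)

lemma finsupp_linear_zero: "finsupp_linear F \<Longrightarrow> F (\<lambda>y. 0) = (\<lambda>y. 0)"
  using finsupp_linear_scale[of F "\<lambda>y. 0" 0] by simp

lemma finsupp_linear_minus:
  "finsupp_linear F \<Longrightarrow> finsupp f \<Longrightarrow> F (\<lambda>y. - f y) = (\<lambda>y. - F f y)"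
  using finsupp_linear_scale[of F f "-1"] by simp

lemma finsupp_linear_diff:
  assumes "finsupp_linear F" "finsupp f" "finsupp g"
  shows "F (\<lambda>y. f y - g y) = (\<lambda>y. F f y - F g y)"
  using finsupp_linear_add[OF assms(1,2), of "\<lambda>y. - g y"] finsupp_linear_minus[OF assms(1,3)] assms(3)
  by simp

lemma finsupp_linear_sum:
  assumes F: "finsupp_linear F" and "finite S" and u: "\<And>x. x \<in> S \<Longrightarrow> finsupp (u x)"
  shows "F (\<lambda>y. \<Sum>x\<in>S. c x * u x y) = (\<lambda>y. \<Sum>x\<in>S. c x * F (u x) y)"
  using \<open>finite S\<close> u
proof (induction S rule: finite_induct)
  case empty
  show ?case using finsupp_linear_zero[OF F] by simp
next
  case (insert a S)
  have "F (\<lambda>y. \<Sum>x\<in>insert a S. c x * u x y) = F (\<lambda>y. c a * u a y + (\<Sum>x\<in>S. c x * u x y))"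
    using insert.hyps by simp
  also have "\<dots> = (\<lambda>y. c a * F (u a) y + F (\<lambda>y. \<Sum>x\<in>S. c x * u x y) y)"
    using insert by (simp add: finsupp_linear_add[OF F] finsupp_linear_scale[OF F] finsupp_sum)
  finally show ?case using insert by simp
qed

lemma sum_supp_extend:
  fixes f u :: "idx \<Rightarrow> 'a::field"
  assumes "finite S" "supp f \<subseteq> S"
  shows "(\<Sum>x\<in>supp f. f x * u x) = (\<Sum>x\<in>S. f x * u x)"
  by (rule sum.mono_neutral_left[OF assms]) (auto simp: supp_def)

lemma phi_eq_sum:
  "finite S \<Longrightarrow> supp f \<subseteq> S \<Longrightarrow> phi \<rho> f = (\<lambda>y. \<Sum>x\<in>S. f x * phib \<rho> x y)"
  unfolding phi_def by (simp add: sum_supp_extend)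

lemma finsupp_linear_phi: "finsupp_linear (phi \<rho>)"
proof (rule finsupp_linearI)
  fix f g :: "idx \<Rightarrow> 'a" assume "finsupp f" "finsupp g"
  then have S: "finite (supp f \<union> supp g)" by (simp add: finsupp_def)
  show "phi \<rho> (\<lambda>y. f y + g y) = (\<lambda>y. phi \<rho> f y + phi \<rho> g y)"
    by (simp add: phi_eq_sum[OF S] distrib_right sum.distrib)
next
  fix c and f :: "idx \<Rightarrow> 'a" assume "finsupp f"
  then have S: "finite (supp f)" by (simp add: finsupp_def)
  show "phi \<rho> (\<lambda>y. c * f y) = (\<lambda>y. c * phi \<rho> f y)"
    by (simp add: phi_eq_sum[OF S] sum_distrib_left mult.assoc)
qed

lemma hmult_eq_sum:
  assumes "finite S" "supp f \<subseteq> S" "finite T" "supp g \<subseteq> T"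
  shows "hmult f g = (\<lambda>y. \<Sum>x\<in>S. f x * (\<Sum>x'\<in>T. g x' * bprod x x' y))"
proof
  fix y
  have "hmult f g y = (\<Sum>x\<in>supp f. f x * (\<Sum>x'\<in>supp g. g x' * bprod x x' y))"
    by (simp add: hmult_def sum_distrib_left mult.assoc)
  also have "\<dots> = (\<Sum>x\<in>S. f x * (\<Sum>x'\<in>T. g x' * bprod x x' y))"
    by (simp add: sum_supp_extend[OF assms(3,4)] sum_supp_extend[OF assms(1,2)])
  finally show "hmult f g y = (\<Sum>x\<in>S. f x * (\<Sum>x'\<in>T. g x' * bprod x x' y))" .
qed

lemma finsupp_linear_hmult_left: "finsupp g \<Longrightarrow> finsupp_linear (\<lambda>f. hmult f g)"
proof (rule finsupp_linearI)
  fix f f' :: "idx \<Rightarrow> 'a" assume "finsupp g" "finsupp f" "finsupp f'"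
  then have S: "finite (supp f \<union> supp f')" and T: "finite (supp g)" by (simp_all add: finsupp_def)
  show "hmult (\<lambda>y. f y + f' y) g = (\<lambda>y. hmult f g y + hmult f' g y)"
    by (simp add: hmult_eq_sum[OF S _ T] distrib_right sum.distrib)
next
  fix c and f :: "idx \<Rightarrow> 'a" assume "finsupp g" "finsupp f"
  then have S: "finite (supp f)" and T: "finite (supp g)" by (simp_all add: finsupp_def)
  show "hmult (\<lambda>y. c * f y) g = (\<lambda>y. c * hmult f g y)"
    by (simp add: hmult_eq_sum[OF S _ T] sum_distrib_left mult.assoc)
qed

lemma finsupp_linear_hmult_right: "finsupp f \<Longrightarrow> finsupp_linear (hmult f)"
proof (rule finsupp_linearI)
  fix g g' :: "idx \<Rightarrow> 'a" assume "finsupp f" "finsupp g" "finsupp g'"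
  then have S: "finite (supp f)" and T: "finite (supp g \<union> supp g')" by (simp_all add: finsupp_def)
  show "hmult f (\<lambda>y. g y + g' y) = (\<lambda>y. hmult f g y + hmult f g' y)"
    by (simp add: hmult_eq_sum[OF S _ T] distrib_left distrib_right sum.distrib)
next
  fix c and g :: "idx \<Rightarrow> 'a" assume "finsupp f" "finsupp g"
  then have S: "finite (supp f)" and T: "finite (supp g)" by (simp_all add: finsupp_def)
  show "hmult f (\<lambda>y. c * g y) = (\<lambda>y. c * hmult f g y)"
    by (simp add: hmult_eq_sum[OF S _ T] sum_distrib_left mult.assoc mult.left_commute)
qed

lemma hmult_bvec: "hmult (bvec x) (bvec x') = (bprod x x' :: idx \<Rightarrow> 'a::field)"
  unfolding hmult_def supp_bvec by (simp add: bvec_def)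

lemma phi_bvec: "phi \<rho> (bvec x) = (phib \<rho> x :: idx \<Rightarrow> 'a::field)"
  unfolding phi_def supp_bvec by (simp add: bvec_def)

section \<open>Isometries of the integers\<close>

(* In fact Dinf = int_isometries; only the inclusion is needed. *)
definition int_isometries :: "(int \<Rightarrow> int) set" where
  "int_isometries = range (+) \<union> range refl_m"

lemma int_isometries_cases:
  assumes "\<rho> \<in> int_isometries"
  obtains t where "\<rho> = (+) t" | m where "\<rho> = refl_m m"
  using assms unfolding int_isometries_def by blast

lemma translation_in_int_isometries [simp]: "(+) t \<in> int_isometries"
  by (simp add: int_isometries_def)

lemma refl_m_in_int_isometries [simp]: "refl_m m \<in> int_isometries"
  by (simp add: int_isometries_def)

lemma id_eq_translation: "id = (+) (0::int)"
  by (simp add: fun_eq_iff)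

lemma id_in_int_isometries [simp]: "id \<in> int_isometries"
  by (simp only: id_eq_translation translation_in_int_isometries)

lemma refl_m_apply [simp]: "refl_m m i = m - i"
  by (simp add: refl_m_def)

lemma int_isometries_comp_simps:
  "(+) t \<circ> (+) s = (+) (t + s)"
  "(+) t \<circ> refl_m m = refl_m (t + m)"
  "refl_m m \<circ> (+) t = refl_m (m - t)"
  "refl_m m \<circ> refl_m m' = (+) (m - m')"
  by (auto simp: fun_eq_iff)

lemma comp_in_int_isometries:
  "\<rho> \<in> int_isometries \<Longrightarrow> \<sigma> \<in> int_isometries \<Longrightarrow> \<rho> \<circ> \<sigma> \<in> int_isometries"
  by (elim int_isometries_cases) (simp_all add: int_isometries_comp_simps)

lemma Dinf_subset_int_isometries: "\<rho> \<in> Dinf \<Longrightarrow> \<rho> \<in> int_isometries"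
  by (induction rule: Dinf.induct)
    (simp_all only: id_in_int_isometries refl_m_in_int_isometries comp_in_int_isometries)

lemma int_isometries_inverse:
  assumes "\<rho> \<in> int_isometries"
  obtains \<sigma> where "\<sigma> \<in> int_isometries" "\<sigma> \<circ> \<rho> = id" "\<rho> \<circ> \<sigma> = id"
  using assms
proof (cases rule: int_isometries_cases)
  case (1 t)
  then show ?thesis using that[OF translation_in_int_isometries[of "- t"]] by (simp add: fun_eq_iff)
next
  case (2 m)
  then show ?thesis using that[of "refl_m m"] by (simp add: fun_eq_iff)
qed

lemma dsgn_translation [simp]: "dsgn ((+) t) = 1"
proof -
  have "(+) t \<noteq> refl_m m" for m
  proof
    assume "(+) t = refl_m m"
    from fun_cong[OF this, of 0] fun_cong[OF this, of 1] show False by simp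
  qed
  then show ?thesis by (simp add: dsgn_def)
qed

lemma dsgn_refl_m [simp]: "dsgn (refl_m m) = -1"
  by (auto simp: dsgn_def)

lemma dsgn_id: "dsgn id = 1"
  by (simp only: id_eq_translation dsgn_translation)

lemma dsgn_comp:
  "\<rho> \<in> int_isometries \<Longrightarrow> \<sigma> \<in> int_isometries \<Longrightarrow> dsgn (\<rho> \<circ> \<sigma>) = dsgn \<rho> * dsgn \<sigma>"
  by (elim int_isometries_cases) (simp_all add: int_isometries_comp_simps)

lemma dsgn_mult_cancel: "\<rho> \<in> int_isometries \<Longrightarrow> dsgn \<rho> * (dsgn \<rho> * c) = c"
  by (elim int_isometries_cases) simp_all

lemma int_isometry_mod3_iff:
  "\<rho> \<in> int_isometries \<Longrightarrow> \<rho> a mod 3 = \<rho> b mod 3 \<longleftrightarrow> a mod 3 = b mod 3"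
  by (elim int_isometries_cases) (auto simp: mod_eq_dvd_iff dvd_diff_commute)

lemma int_isometry_dist: "\<rho> \<in> int_isometries \<Longrightarrow> \<bar>\<rho> a - \<rho> b\<bar> = \<bar>a - b\<bar>"
  by (elim int_isometries_cases) auto

lemma int_isometry_neg_add_mod3:
  "\<rho> \<in> int_isometries \<Longrightarrow> \<rho> (- (a + b)) mod 3 = (- (\<rho> a + \<rho> b)) mod 3"
  by (elim int_isometries_cases) (simp_all add: mod_eq_dvd_iff algebra_simps)

section \<open>Residues mod 3 and products with p\<close>

lemma pel_cong_mod3: "a mod 3 = b mod 3 \<Longrightarrow> pel a k = pel b k"
  by (simp add: pel_def)

lemma zel_cong_mod3:
  assumes "a mod 3 = b mod 3"
  shows "zel a k = zel b k"
proof -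
  have "(a + 1) mod 3 = (b + 1) mod 3" "(a - 1) mod 3 = (b - 1) mod 3"
    using assms by (simp_all add: mod_eq_dvd_iff)
  then show ?thesis by (simp add: zel_def pel_cong_mod3[of "a + 1" "b + 1"] pel_cong_mod3[of "a - 1" "b - 1"])
qed

lemma pel_sum_residues:
  assumes "a mod 3 \<noteq> b mod 3" "b mod 3 \<noteq> c mod 3" "a mod 3 \<noteq> c mod 3"
  shows "pel a k y + pel b k y + pel c k y = (0::'a::field)"
proof -
  have "a mod 3 \<in> {0,1,2}" "b mod 3 \<in> {0,1,2}" "c mod 3 \<in> {0,1,2}" by auto
  then show ?thesis using assms unfolding pel_def by (auto simp: algebra_simps)
qed

lemma zel_sum_residues:
  assumes "a mod 3 \<noteq> b mod 3" "b mod 3 \<noteq> c mod 3" "a mod 3 \<noteq> c mod 3"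
  shows "zel a k y + zel b k y + zel c k y = (0::'a::field)"
proof -
  have "zel a k y + zel b k y + zel c k y =
        (pel (a + 1) k y + pel (b + 1) k y + pel (c + 1) k y)
          - (pel (a - 1) k y + pel (b - 1) k y + pel (c - 1) k y :: 'a)"
    by (simp add: zel_def algebra_simps)
  also have "\<dots> = 0"
    using assms by (simp add: pel_sum_residues mod_eq_dvd_iff)
  finally show ?thesis .
qed

(* p_r with r = 0 mod 3 is not a basis vector; this is how identities proved on the basis
   vectors p_1, p_2 transfer to every p_r. *)
lemma finsupp_linear_pel:
  fixes F :: "(idx \<Rightarrow> 'a::field) \<Rightarrow> idx \<Rightarrow> 'a" and G :: "int \<Rightarrow> idx \<Rightarrow> 'a"
  assumes F: "finsupp_linear F" and k: "1 \<le> k" "3 dvd k"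
    and G_cong: "\<And>a b. a mod 3 = b mod 3 \<Longrightarrow> G a = G b"
    and G_sum: "\<And>y. G 0 y + G 1 y + G 2 y = 0"
    and G1: "F (bvec (IP 1 k)) = G 1" and G2: "F (bvec (IP 2 k)) = G 2"
  shows "F (pel r k) = G r"
proof -
  have "r mod 3 \<in> {0, 1, 2}" by auto
  then consider "r mod 3 = 0" | "r mod 3 = 1" | "r mod 3 = 2" by blast
  then show ?thesis
  proof cases
    case 1
    have "F (pel r k) = F (\<lambda>y. - bvec (IP 1 k) y - bvec (IP 2 k) y)"
      using 1 k by (simp add: pel_def)
    also have "\<dots> = (\<lambda>y. - G 1 y - G 2 y)"
      by (simp add: finsupp_linear_diff[OF F] finsupp_linear_minus[OF F] G1 G2)
    also have "\<dots> = G 0"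
    proof
      fix y
      show "- G 1 y - G 2 y = G 0 y" using G_sum[of y] by algebra
    qed
    finally show ?thesis using G_cong[of r 0] 1 by simp
  next
    case 2
    then show ?thesis using k G1 G_cong[of r 1] by (simp add: pel_def)
  next
    case 3
    then show ?thesis using k G2 G_cong[of r 2] by (simp add: pel_def)
  qed
qed

lemma bprod_IP_commute: "bprod (IP r k) x = bprod x (IP r k)"
  by (cases x) (simp_all add: ac_simps abs_minus_commute)

lemma bprod_IP_cong_mod3:
  assumes "a mod 3 = b mod 3"
  shows "bprod x (IP a k) = bprod x (IP b k)"
proof (cases x)
  case (IA i)
  have m: "(- (i + a)) mod 3 = (- (i + b)) mod 3"
    using assms by (simp add: mod_eq_dvd_iff dvd_diff_commute)
  show ?thesis unfolding IA bprod.simps by (simp only: pel_cong_mod3[OF assms] pel_cong_mod3[OF m])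
next
  case (IS j)
  show ?thesis unfolding IS bprod.simps by (simp only: pel_cong_mod3[OF assms])
next
  case (IP r h)
  have m: "(- (r + a)) mod 3 = (- (r + b)) mod 3"
    using assms by (simp add: mod_eq_dvd_iff dvd_diff_commute)
  show ?thesis unfolding IP bprod.simps by (simp only: zel_cong_mod3[OF m])
qed

lemma bprod_IP_sum_residues:
  "bprod x (IP 0 k) y + bprod x (IP 1 k) y + bprod x (IP 2 k) y = (0::'a::field)"
proof (cases x)
  case (IA i)
  have "bprod x (IP 0 k) y + bprod x (IP 1 k) y + bprod x (IP 2 k) y =
        3/2 * (pel 0 k y + pel 1 k y + pel 2 k y)
          - (pel (- i) k y + pel (- (i + 1)) k y + pel (- (i + 2)) k y :: 'a)"
    using IA by (simp add: algebra_simps)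
  also have "\<dots> = 0" by (simp add: pel_sum_residues mod_eq_dvd_iff)
  finally show ?thesis .
next
  case (IS j)
  have "bprod x (IP 0 k) y + bprod x (IP 1 k) y + bprod x (IP 2 k) y =
        3/4 * ((pel 0 j y + pel 1 j y + pel 2 j y) + (pel 0 k y + pel 1 k y + pel 2 k y))
          - 3/8 * ((pel 0 (nat \<bar>int j - int k\<bar>) y + pel 1 (nat \<bar>int j - int k\<bar>) y
                      + pel 2 (nat \<bar>int j - int k\<bar>) y)
                   + (pel 0 (j + k) y + pel 1 (j + k) y + pel 2 (j + k) y) :: 'a)"
    using IS by (simp add: algebra_simps)
  also have "\<dots> = 0" by (simp add: pel_sum_residues)
  finally show ?thesis .
next
  case (IP s h)
  let ?z = "\<lambda>l. zel (- s) l y + zel (- (s + 1)) l y + zel (- (s + 2)) l y :: 'a"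
  have "bprod x (IP 0 k) y + bprod x (IP 1 k) y + bprod x (IP 2 k) y =
        1/4 * (?z h + ?z k) - 1/8 * (?z (nat \<bar>int h - int k\<bar>) + ?z (h + k))"
    using IP by (simp add: algebra_simps)
  also have "\<dots> = 0" by (simp add: zel_sum_residues mod_eq_dvd_iff)
  finally show ?thesis .
qed

lemma hmult_bvec_pel:
  assumes "1 \<le> k" "3 dvd k"
  shows "hmult (bvec x) (pel r k) = (bprod x (IP r k) :: idx \<Rightarrow> 'a::field)"
  by (rule finsupp_linear_pel[where G = "\<lambda>r. bprod x (IP r k)",
        OF finsupp_linear_hmult_right[OF finsupp_bvec] assms
           bprod_IP_cong_mod3 bprod_IP_sum_residues hmult_bvec hmult_bvec])

lemma hmult_pel_bvec:
  assumes "1 \<le> k" "3 dvd k"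
  shows "hmult (pel r k) (bvec x) = (bprod (IP r k) x :: idx \<Rightarrow> 'a::field)"
  unfolding bprod_IP_commute
  by (rule finsupp_linear_pel[where G = "\<lambda>r. bprod x (IP r k)",
        OF finsupp_linear_hmult_left[OF finsupp_bvec] assms bprod_IP_cong_mod3 bprod_IP_sum_residues])
    (simp_all only: hmult_bvec bprod_IP_commute)

lemma hmult_pel_pel:
  assumes "1 \<le> h" "3 dvd h" "1 \<le> k" "3 dvd k"
  shows "hmult (pel r h) (pel t k) = (bprod (IP r h) (IP t k) :: idx \<Rightarrow> 'a::field)"
  unfolding bprod_IP_commute[of r h]
  by (rule finsupp_linear_pel[where G = "\<lambda>r. bprod (IP t k) (IP r h)",
        OF finsupp_linear_hmult_left[OF finsupp_pel] assms(1,2) bprod_IP_cong_mod3 bprod_IP_sum_residues])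
    (simp_all only: hmult_bvec_pel[OF assms(3,4)] bprod_IP_commute[of _ h])

section \<open>The maps phi\<close>

lemma phib_simps:
  "phib \<rho> (IA i) = ael (\<rho> i)"
  "phib \<rho> (IS j) = sel j"
  "phib \<rho> (IP r k) = (\<lambda>y. dsgn \<rho> * pel (\<rho> r) k y)"
  by (simp_all add: phib_def vsc_def)

lemma phi_zero [simp]: "phi \<rho> (\<lambda>y. 0) = (\<lambda>y. 0)"
  by (simp add: phi_def supp_def)

lemma phi_ael: "phi \<rho> (ael i) = ael (\<rho> i)"
  by (simp add: ael_def phi_bvec phib_simps)

lemma phi_sel: "phi \<rho> (sel j) = (sel j :: idx \<Rightarrow> 'a::field)"
  by (simp add: sel_def phi_bvec phib_simps)

lemma phi_pel:
  assumes \<rho>: "\<rho> \<in> int_isometries"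
  shows "phi \<rho> (pel r k) = (\<lambda>y. dsgn \<rho> * pel (\<rho> r) k y :: 'a::field)"
proof (cases "1 \<le> k \<and> 3 dvd k")
  case False
  then show ?thesis by (simp add: pel_def)
next
  case True
  then have k: "1 \<le> k" "3 dvd k" by simp_all
  show ?thesis
  proof (rule finsupp_linear_pel[OF finsupp_linear_phi k])
    show "(\<lambda>y. dsgn \<rho> * pel (\<rho> a) k y) = (\<lambda>y. dsgn \<rho> * pel (\<rho> b) k y :: 'a)"
      if "a mod 3 = b mod 3" for a b
    proof -
      have "pel (\<rho> a) k = (pel (\<rho> b) k :: idx \<Rightarrow> 'a)"
        using that by (intro pel_cong_mod3) (simp add: int_isometry_mod3_iff[OF \<rho>])
      then show ?thesis by simp
    qed
    have "pel (\<rho> 0) k y + pel (\<rho> 1) k y + pel (\<rho> 2) k y = (0::'a)" for y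
      by (rule pel_sum_residues) (simp_all add: int_isometry_mod3_iff[OF \<rho>])
    then show "dsgn \<rho> * pel (\<rho> 0) k y + dsgn \<rho> * pel (\<rho> 1) k y + dsgn \<rho> * pel (\<rho> 2) k y = (0::'a)"
      for y
      by (simp add: distrib_left[symmetric])
  qed (simp_all add: phi_bvec phib_simps)
qed

lemma phi_zel:
  assumes \<rho>: "\<rho> \<in> int_isometries"
  shows "phi \<rho> (zel r k) = (zel (\<rho> r) k :: idx \<Rightarrow> 'a::field)"
proof -
  have "phi \<rho> (zel r k) = (\<lambda>y. dsgn \<rho> * pel (\<rho> (r + 1)) k y - dsgn \<rho> * pel (\<rho> (r - 1)) k y :: 'a)"
    by (simp add: zel_def finsupp_linear_diff[OF finsupp_linear_phi] phi_pel[OF \<rho>])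
  also have "\<dots> = zel (\<rho> r) k" \<comment> \<open>a reflection swaps r + 1 and r - 1, cancelling its sign\<close>
    using \<rho> by (cases rule: int_isometries_cases) (simp_all add: zel_def algebra_simps)
  finally show ?thesis .
qed

lemma valid_idx_simps:
  "valid_idx (IA i)"
  "valid_idx (IS j) \<longleftrightarrow> 1 \<le> j"
  "valid_idx (IP r k) \<longleftrightarrow> (r = 1 \<or> r = 2) \<and> 1 \<le> k \<and> 3 dvd k"
  by (simp_all add: valid_idx_def)

lemma sel_eq_bvec: "1 \<le> j \<Longrightarrow> sel j = bvec (IS j)"
  by (simp add: sel_def)

lemma bvec_IA_isometry_neighbours:
  assumes "\<rho> \<in> int_isometries"
  shows "bvec (IA (\<rho> (a - d))) y + bvec (IA (\<rho> (a + d))) y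
       = (bvec (IA (\<rho> a - d)) y + bvec (IA (\<rho> a + d)) y :: 'a::field)"
  using assms by (cases rule: int_isometries_cases) (simp_all add: algebra_simps)

lemma phi_bprod:
  assumes \<rho>: "\<rho> \<in> int_isometries" and "valid_idx x" "valid_idx x'"
  shows "phi \<rho> (bprod x x') = (hmult (phib \<rho> x) (phib \<rho> x') :: idx \<Rightarrow> 'a::field)"
proof -
  note linearity =
    finsupp_linear_add[OF finsupp_linear_phi] finsupp_linear_diff[OF finsupp_linear_phi]
    finsupp_linear_scale[OF finsupp_linear_phi] finsupp_linear_minus[OF finsupp_linear_phi]
    finsupp_linear_scale[OF finsupp_linear_hmult_left] finsupp_linear_scale[OF finsupp_linear_hmult_right]
    finsupp_add finsupp_diff finsupp_scale finsupp_uminus finsupp_bvec finsupp_sel finsupp_pel finsupp_zel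
  note generators =
    ael_def sel_eq_bvec phib_simps phi_bvec phi_sel phi_pel[OF \<rho>] phi_zel[OF \<rho>]
    hmult_bvec hmult_bvec_pel hmult_pel_bvec hmult_pel_pel
  note isometry =
    int_isometry_dist[OF \<rho>] bvec_IA_isometry_neighbours[OF \<rho>]
    pel_cong_mod3[OF int_isometry_neg_add_mod3[OF \<rho>]] zel_cong_mod3[OF int_isometry_neg_add_mod3[OF \<rho>]]
    dsgn_mult_cancel[OF \<rho>]
  show ?thesis
    using assms(2,3)
    by (cases x; cases x'; simp only: valid_idx_simps bprod.simps linearity generators isometry;
        simp add: algebra_simps)
qed

lemma phib_valid_idx:
  assumes "valid_idx x" "phib \<rho> x y \<noteq> (0::'a::field)"
  shows "valid_idx y"
  using assms by (cases x) (auto simp: phib_simps ael_def sel_def pel_def bvec_def valid_idx_def split: if_splits)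

lemma phi_in_Hcarrier:
  assumes f: "f \<in> Hcarrier"
  shows "phi \<rho> f \<in> (Hcarrier :: (idx \<Rightarrow> 'a::field) set)"
proof -
  have S: "finite (supp f)" using Hcarrier_finsupp[OF f] by (simp add: finsupp_def)
  have "finsupp (phi \<rho> f)" unfolding phi_def by (rule finsupp_sum[OF S]) simp
  moreover have "valid_idx y" if "phi \<rho> f y \<noteq> 0" for y
  proof -
    from that obtain x where "x \<in> supp f" "f x * phib \<rho> x y \<noteq> 0"
      unfolding phi_def using sum.not_neutral_contains_not_neutral by blast
    then show ?thesis using phib_valid_idx[OF Hcarrier_valid_idx[OF f]] by auto
  qed
  ultimately show ?thesis by (auto simp: Hcarrier_def finsupp_def)
qed

lemma phi_hmult:
  assumes \<rho>: "\<rho> \<in> int_isometries" and f: "f \<in> Hcarrier" and g: "g \<in> Hcarrier"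
  shows "phi \<rho> (hmult f g) = hmult (phi \<rho> f) (phi \<rho> (g :: idx \<Rightarrow> 'a::field))"
proof -
  have F: "finite (supp f)" and G: "finite (supp g)"
    using Hcarrier_finsupp[OF f] Hcarrier_finsupp[OF g] by (simp_all add: finsupp_def)
  have "phi \<rho> (hmult f g) = phi \<rho> (\<lambda>y. \<Sum>x\<in>supp f. f x * (\<Sum>x'\<in>supp g. g x' * bprod x x' y))"
    by (simp add: hmult_eq_sum[OF F _ G])
  also have "\<dots> = (\<lambda>y. \<Sum>x\<in>supp f. f x * (\<Sum>x'\<in>supp g. g x' * phi \<rho> (bprod x x') y))"
    using G by (simp add: finsupp_linear_sum[OF finsupp_linear_phi F] finsupp_sum
        finsupp_linear_sum[OF finsupp_linear_phi G])
  also have "\<dots> = (\<lambda>y. \<Sum>x\<in>supp f. f x * (\<Sum>x'\<in>supp g. g x' * hmult (phib \<rho> x) (phib \<rho> x') y))"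
    by (simp add: phi_bprod[OF \<rho> Hcarrier_valid_idx[OF f] Hcarrier_valid_idx[OF g]])
  also have "\<dots> = hmult (phi \<rho> f) (phi \<rho> g)"
    unfolding phi_def
    by (simp add: finsupp_linear_sum[OF finsupp_linear_hmult_left F] finsupp_sum[OF G]
        finsupp_linear_sum[OF finsupp_linear_hmult_right G])
  finally show ?thesis .
qed

lemma phib_comp:
  assumes "\<rho> \<in> int_isometries" "\<sigma> \<in> int_isometries"
  shows "phi \<rho> (phib \<sigma> x) = (phib (\<rho> \<circ> \<sigma>) x :: idx \<Rightarrow> 'a::field)"
  by (cases x)
    (simp_all add: phib_simps phi_ael phi_sel finsupp_linear_scale[OF finsupp_linear_phi]
      phi_pel[OF assms(1)] dsgn_comp[OF assms] mult.assoc mult.left_commute)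

lemma phi_comp:
  assumes "\<rho> \<in> int_isometries" "\<sigma> \<in> int_isometries" and f: "finsupp f"
  shows "phi (\<rho> \<circ> \<sigma>) f = phi \<rho> (phi \<sigma> f :: idx \<Rightarrow> 'a::field)"
proof -
  have S: "finite (supp f)" using f by (simp add: finsupp_def)
  have "phi \<rho> (phi \<sigma> f) = (\<lambda>y. \<Sum>x\<in>supp f. f x * phi \<rho> (phib \<sigma> x) y)"
    unfolding phi_def[of \<sigma>] by (rule finsupp_linear_sum[OF finsupp_linear_phi S]) simp
  also have "\<dots> = phi (\<rho> \<circ> \<sigma>) f"
    by (simp add: phib_comp[OF assms(1,2)] phi_def[of "\<rho> \<circ> \<sigma>"])
  finally show ?thesis ..
qed

lemma phib_id: "valid_idx x \<Longrightarrow> phib id x = (bvec x :: idx \<Rightarrow> 'a::field)"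
  by (cases x) (auto simp: phib_simps ael_def sel_def pel_def valid_idx_def dsgn_id)

lemma phi_id:
  assumes f: "f \<in> Hcarrier"
  shows "phi id f = (f :: idx \<Rightarrow> 'a::field)"
proof
  fix y
  have "phi id f y = (\<Sum>x\<in>supp f. f x * bvec x y)"
    unfolding phi_def by (simp add: phib_id Hcarrier_valid_idx[OF f])
  also have "\<dots> = (\<Sum>x\<in>supp f. if x = y then f y else 0)"
    by (rule sum.cong) (auto simp: bvec_def)
  also have "\<dots> = f y"
    using Hcarrier_finsupp[OF f] by (simp add: finsupp_def supp_def)
  finally show "phi id f y = f y" .
qed

lemma is_hat_aut_phi:
  assumes \<rho>: "\<rho> \<in> int_isometries"
  shows "is_hat_aut (phi \<rho> :: (idx \<Rightarrow> 'a::field) \<Rightarrow> idx \<Rightarrow> 'a)"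
  unfolding is_hat_aut_def
proof (intro conjI ballI allI)
  obtain \<sigma> where \<sigma>: "\<sigma> \<in> int_isometries" "\<sigma> \<circ> \<rho> = id" "\<rho> \<circ> \<sigma> = id"
    using int_isometries_inverse[OF \<rho>] .
  show "bij_betw (phi \<rho>) (Hcarrier :: (idx \<Rightarrow> 'a) set) Hcarrier"
  proof (rule bij_betw_byWitness[where f' = "phi \<sigma>"])
    show "\<forall>f\<in>(Hcarrier :: (idx \<Rightarrow> 'a) set). phi \<sigma> (phi \<rho> f) = f"
      using phi_comp[OF \<sigma>(1) \<rho> Hcarrier_finsupp] phi_id \<sigma>(2) by metis
    show "\<forall>f\<in>(Hcarrier :: (idx \<Rightarrow> 'a) set). phi \<rho> (phi \<sigma> f) = f"
      using phi_comp[OF \<rho> \<sigma>(1) Hcarrier_finsupp] phi_id \<sigma>(3) by metis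
  qed (auto intro: phi_in_Hcarrier)
next
  fix f g :: "idx \<Rightarrow> 'a" assume "f \<in> Hcarrier" "g \<in> Hcarrier"
  then show "phi \<rho> (vadd f g) = vadd (phi \<rho> f) (phi \<rho> g)"
    and "phi \<rho> (hmult f g) = hmult (phi \<rho> f) (phi \<rho> g)"
    by (simp_all add: vadd_def finsupp_linear_add[OF finsupp_linear_phi] Hcarrier_finsupp phi_hmult[OF \<rho>])
next
  fix c and f :: "idx \<Rightarrow> 'a" assume "f \<in> Hcarrier"
  then show "phi \<rho> (vsc c f) = vsc c (phi \<rho> f)"
    by (simp add: vsc_def finsupp_linear_scale[OF finsupp_linear_phi] Hcarrier_finsupp)
qed

lemma ael_in_Hcarrier: "ael i \<in> Hcarrier"
  by (auto simp: Hcarrier_def ael_def bvec_def valid_idx_def supp_def)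

lemma ael_inject: "ael a = (ael b :: idx \<Rightarrow> 'a::field) \<longleftrightarrow> a = b"
  by (auto simp: ael_def bvec_def fun_eq_iff)

lemma phi_eq_on_Hcarrier_imp_eq:
  assumes "\<forall>f\<in>(Hcarrier :: (idx \<Rightarrow> 'a::field) set). phi \<rho> f = phi \<sigma> f"
  shows "\<rho> = \<sigma>"
proof
  fix i
  have "phi \<rho> (ael i) = (phi \<sigma> (ael i) :: idx \<Rightarrow> 'a)" using assms ael_in_Hcarrier by blast
  then show "\<rho> i = \<sigma> i" by (simp add: phi_ael ael_inject)
qed

(* The hypothesis char is not needed: in characteristic 2 the coefficients 1/2, 3/8, ... of
   hmult are junk values of division, and phi_rho is an automorphism all the same. *)
theorem proposition3p5:
  assumes char: "(2::'a::field) \<noteq> 0"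
  shows "(\<forall>\<rho>\<in>Dinf. is_hat_aut (phi \<rho> :: (idx \<Rightarrow> 'a) \<Rightarrow> idx \<Rightarrow> 'a))
       \<and> (\<forall>\<rho>\<in>Dinf. \<forall>\<sigma>\<in>Dinf. \<forall>f\<in>(Hcarrier :: (idx \<Rightarrow> 'a) set).
            phi (\<rho> \<circ> \<sigma>) f = phi \<rho> (phi \<sigma> f))
       \<and> (\<forall>\<rho>\<in>Dinf. \<forall>\<sigma>\<in>Dinf.
            (\<forall>f\<in>(Hcarrier :: (idx \<Rightarrow> 'a) set). phi \<rho> f = phi \<sigma> f) \<longrightarrow> \<rho> = \<sigma>)"
  by (blast intro: is_hat_aut_phi phi_comp Hcarrier_finsupp Dinf_subset_int_isometries
      phi_eq_on_Hcarrier_imp_eq)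

end
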